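(* Let $h\ge 3$ and let $W\in\mathcal W^2_{h\times 3}$ be an atomic $2$-full word. Then $W$ contains a bench with its seat in column $1$ and legs in column $2$, and a bench with its seat in column $3$ and legs in column $2$.
   Context: A 2-dimensional binary word of dimensions $h\times w$ is an $h\times w$ matrix with entries in $\{\square,\blacksquare\}$ (filled cells $\blacksquare$, empty cells $\square$). Two cells $(i,j),(i',j')$ are adjacent if $|i-i'|+|j-j'|=1$; the degree of a filled cell is the number of filled cells adjacent to it. $\mathcal W^2_{h\times w}$ is the set of $h\times w$ binary words in which every filled cell has degree at most $2$; $W$ is $2$-full if its number of filled cells is maximal in $\mathcal W^2_{h\times w}$. $W$ is atomic if no row of $W$ consists only of empty cells. For columns $j,j'$ with $|j-j'|=1$, a bench with seat in column $j$ and legs in column $j'$ is given by integers $n\ge 3$ and $i$ with $1\le i\le i+n-1\le h$ such that the cells $(i,j),(i+1,j),\dots,(i+n-1,j)$ are all filled, the cells $(i,j')$ and $(i+n-1,j')$ are filled, and the cells $(i+1,j'),\dots,(i+n-2,j')$ are empty. *)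

theory Defs
  imports Main
begin

text \<open>A binary word of dimensions h x w is represented by its set of filled cells,
  a subset of {1..h} x {1..w} (cell (i,j) = row i, column j).\<close>

definition is_word :: "nat \<Rightarrow> nat \<Rightarrow> (nat \<times> nat) set \<Rightarrow> bool" where
  "is_word h w W \<longleftrightarrow> W \<subseteq> {1..h} \<times> {1..w}"

definition adjacent :: "nat \<times> nat \<Rightarrow> nat \<times> nat \<Rightarrow> bool" where
  "adjacent c c' \<longleftrightarrow>
     \<bar>int (fst c) - int (fst c')\<bar> + \<bar>int (snd c) - int (snd c')\<bar> = 1"

definition degree :: "(nat \<times> nat) set \<Rightarrow> nat \<times> nat \<Rightarrow> nat" where
  "degree W c = card {c' \<in> W. adjacent c c'}"

definition W2 :: "nat \<Rightarrow> nat \<Rightarrow> (nat \<times> nat) set set" where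
  "W2 h w = {W. is_word h w W \<and> (\<forall>c\<in>W. degree W c \<le> 2)}"

definition two_full :: "nat \<Rightarrow> nat \<Rightarrow> (nat \<times> nat) set \<Rightarrow> bool" where
  "two_full h w W \<longleftrightarrow> W \<in> W2 h w \<and> (\<forall>V \<in> W2 h w. card V \<le> card W)"

definition atomic :: "nat \<Rightarrow> nat \<Rightarrow> (nat \<times> nat) set \<Rightarrow> bool" where
  "atomic h w W \<longleftrightarrow> (\<forall>i\<in>{1..h}. \<exists>j\<in>{1..w}. (i,j) \<in> W)"

text \<open>Bench with seat in column j and legs in column j' (|j - j'| = 1), in an h-row word.\<close>
definition has_bench :: "nat \<Rightarrow> (nat \<times> nat) set \<Rightarrow> nat \<Rightarrow> nat \<Rightarrow> bool" where
  "has_bench h W j j' \<longleftrightarrow>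
     (\<exists>n i. n \<ge> 3 \<and> 1 \<le> i \<and> i + n - 1 \<le> h \<and>
        (\<forall>k\<in>{i..i+n-1}. (k,j) \<in> W) \<and>
        (i,j') \<in> W \<and> (i+n-1,j') \<in> W \<and>
        (\<forall>k\<in>{i+1..i+n-2}. (k,j') \<notin> W))"

end

theory Submission
  imports Defs
begin

text \<open>
  Write c_i for the number of filled cells in row i. Filling columns 1 and 3 and the two end
  cells of column 2 gives a word in W^2 with 2h + 2 cells, so a 2-full word has
  sum_i (c_i - 2) >= 2. Only full rows contribute positively; two full rows are never adjacent,
  and an interior full row is flanked by single-cell rows. Hence the partial sums up to row n are
  at most [c_1 = 3] + [c_n = 3] - [some c_i = 1], which forces rows 1 and h to be full and every
  row to have at least two cells.

  Now scan a seat column j in {1, 3} downwards, k being the other outer column. A row missing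
  column j is {2, k}, and the degree bound at its cells forces the next row to contain j and 2,
  i.e. to start a seat segment with a leg; such a leg cannot be followed directly by another one.
  So an open segment can only be left through a gap row, which reopens one, and since row h is
  full the scan must close a segment with a second leg at distance at least 2: a bench.
\<close>

definition row :: "(nat \<times> nat) set \<Rightarrow> nat \<Rightarrow> nat set" where
  "row W i = {j. (i, j) \<in> W}"

lemma mem_row_iff [simp]: "j \<in> row W i \<longleftrightarrow> (i, j) \<in> W"
  unfolding row_def by simp

lemma adjacent_iff:
  "adjacent (i, j) (p, q) \<longleftrightarrow>
     (p = i \<and> (q = j + 1 \<or> q + 1 = j)) \<or> (q = j \<and> (p = i + 1 \<or> p + 1 = i))"
  unfolding adjacent_def by auto

lemma finite_word: "is_word h w W \<Longrightarrow> finite W"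
  unfolding is_word_def by (rule finite_subset) auto

lemma row_subset_columns: "is_word h w W \<Longrightarrow> row W i \<subseteq> {1..w}"
  unfolding is_word_def row_def by auto

lemma row_subset_three:
  assumes "is_word h 3 W"
  shows "row W i \<subseteq> {1, 2, 3}"
proof -
  have "{1..3 :: nat} = {1, 2, 3}" by auto
  with row_subset_columns[OF assms] show ?thesis by simp
qed

lemma atomic_row_nonempty: "atomic h w W \<Longrightarrow> i \<in> {1..h} \<Longrightarrow> row W i \<noteq> {}"
  unfolding atomic_def by fastforce

lemma full_row_iff_card:
  assumes "is_word h 3 W"
  shows "row W i = {1, 2, 3} \<longleftrightarrow> card (row W i) = 3"
proof
  assume "card (row W i) = 3"
  then show "row W i = {1, 2, 3}"
    using card_subset_eq[OF _ row_subset_three[OF assms], of i] by simp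
qed simp

lemma card_word_eq_sum_rows:
  assumes "is_word h w W"
  shows "card W = (\<Sum>i=1..h. card (row W i))"
proof -
  have "W = (SIGMA i:{1..h}. row W i)"
    using assms unfolding is_word_def row_def by auto
  moreover have "finite (row W i)" for i
    using row_subset_columns[OF assms] by (rule finite_subset) simp
  ultimately show ?thesis by (metis card_SigmaI finite_atLeastAtMost)
qed

lemma three_le_degree:
  assumes "finite W" "x \<in> W" "y \<in> W" "z \<in> W" "distinct [x, y, z]"
    and "adjacent c x" "adjacent c y" "adjacent c z"
  shows "3 \<le> degree W c"
proof -
  have "{x, y, z} \<subseteq> {c' \<in> W. adjacent c c'}" using assms by auto
  then have "card {x, y, z} \<le> degree W c"
    unfolding degree_def by (rule card_mono[rotated]) (use assms(1) in simp)
  then show ?thesis using assms(5) by simp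
qed

lemma W2_no_three_neighbours:
  assumes "W \<in> W2 h w" "c \<in> W" "x \<in> W" "y \<in> W" "z \<in> W" "distinct [x, y, z]"
    and "adjacent c x" "adjacent c y" "adjacent c z"
  shows False
  using three_le_degree[OF finite_word assms(3-9)] assms(1,2) unfolding W2_def by fastforce

lemma degree_le_two:
  assumes "finite W" "{c' \<in> W. adjacent c c'} \<subseteq> {x, y}"
  shows "degree W c \<le> 2"
proof -
  have "degree W c \<le> card {x, y}"
    unfolding degree_def by (rule card_mono[OF _ assms(2)]) simp
  also have "\<dots> \<le> 2" by (simp add: card_insert_le_m1)
  finally show ?thesis .
qed

definition frame :: "nat \<Rightarrow> (nat \<times> nat) set" where
  "frame h = {1..h} \<times> {1, 3} \<union> {(1, 2), (h, 2)}"

lemma frame_in_W2: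
  assumes "3 \<le> h"
  shows "frame h \<in> W2 h 3"
proof -
  have fin: "finite (frame h)" unfolding frame_def by simp
  have "degree (frame h) (i, j) \<le> 2" if mem: "(i, j) \<in> frame h" for i j
  proof -
    consider "j \<in> {1, 3}" "i = 1" | "j \<in> {1, 3}" "i = h" | "j \<in> {1, 3}" "1 < i" "i < h"
      | "j = 2" "i \<in> {1, h}"
      using mem unfolding frame_def by (cases "i = 1 \<or> i = h") auto
    then show ?thesis
    proof cases
      case 1
      then show ?thesis
        by (intro degree_le_two[OF fin, of _ "(2, j)" "(1, 2)"])
          (use assms in \<open>auto simp: frame_def adjacent_iff\<close>)
    next
      case 2
      then show ?thesis
        by (intro degree_le_two[OF fin, of _ "(h - 1, j)" "(h, 2)"])
          (use assms in \<open>auto simp: frame_def adjacent_iff\<close>)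
    next
      case 3
      then show ?thesis
        by (intro degree_le_two[OF fin, of _ "(i - 1, j)" "(i + 1, j)"])
          (use assms in \<open>auto simp: frame_def adjacent_iff\<close>)
    next
      case 4
      then show ?thesis
        by (intro degree_le_two[OF fin, of _ "(i, 1)" "(i, 3)"])
          (use assms in \<open>auto simp: frame_def adjacent_iff\<close>)
    qed
  qed
  moreover have "is_word h 3 (frame h)"
    using assms unfolding frame_def is_word_def by auto
  ultimately show ?thesis unfolding W2_def by auto
qed

lemma card_frame:
  assumes "2 \<le> h"
  shows "card (frame h) = 2 * h + 2"
proof -
  have "card ({1..h} \<times> {1, 3 :: nat}) = 2 * h" by (simp add: card_cartesian_product)
  moreover have "card {(1 :: nat, 2 :: nat), (h, 2)} = 2" using assms by simp
  ultimately show ?thesis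
    unfolding frame_def by (subst card_Un_disjoint) auto
qed

lemma two_full_card_ge:
  assumes "3 \<le> h" "two_full h 3 W"
  shows "2 * h + 2 \<le> card W"
proof -
  have "card (frame h) \<le> card W"
    using assms frame_in_W2 unfolding two_full_def by blast
  then show ?thesis using card_frame[of h] assms(1) by simp
qed

lemma row_sum_bound:
  fixes c :: "nat \<Rightarrow> nat"
  assumes range: "\<And>i. i \<in> {1..h} \<Longrightarrow> c i \<in> {1, 2, 3}"
    and no_adjacent_3: "\<And>i. i \<in> {1..<h} \<Longrightarrow> c i = 3 \<Longrightarrow> c (Suc i) \<noteq> 3"
    and interior_3: "\<And>p. p \<in> {2..<h} \<Longrightarrow> c p = 3 \<Longrightarrow> c (p - 1) = 1 \<and> c (Suc p) = 1"
  shows "n \<in> {1..h} \<Longrightarrow>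
    (\<Sum>i=1..n. int (c i) - 2) \<le> of_bool (c 1 = 3) + of_bool (c n = 3) - of_bool (\<exists>i\<in>{1..n}. c i = 1)"
proof (induction n)
  case 0
  then show ?case by simp
next
  case (Suc n)
  show ?case
  proof (cases "n = 0")
    case True
    then show ?thesis using range[of 1] Suc.prems by auto
  next
    case False
    let ?S = "\<Sum>i=1..n. int (c i) - 2"
    have n: "n \<in> {1..<h}" using False Suc.prems by simp
    have IH: "?S \<le> of_bool (c 1 = 3) + of_bool (c n = 3) - of_bool (\<exists>i\<in>{1..n}. c i = 1)"
      using Suc.IH n by simp
    have step: "(\<Sum>i=1..Suc n. int (c i) - 2) = ?S + int (c (Suc n)) - 2"
      using n by simp
    have singles: "(\<exists>i\<in>{1..Suc n}. c i = 1) \<longleftrightarrow> c (Suc n) = 1 \<or> (\<exists>i\<in>{1..n}. c i = 1)"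
      using atLeastAtMostSuc_conv[of 1 n] by simp
    have next_range: "c (Suc n) \<in> {1, 2, 3}" using range Suc.prems by blast
    show ?thesis
    proof (cases "c n = 3")
      case True
      then have "c (Suc n) \<noteq> 3" using no_adjacent_3[OF n] by blast
      show ?thesis
      proof (cases "n = 1")
        case True
        then show ?thesis
          using \<open>c n = 3\<close> \<open>c (Suc n) \<noteq> 3\<close> next_range unfolding step singles by auto
      next
        case False
        then have "c (n - 1) = 1" "c (Suc n) = 1"
          using interior_3[of n] n \<open>c n = 3\<close> by auto
        moreover have "n - 1 \<in> {1..n}" using False n by auto
        ultimately have "\<exists>i\<in>{1..n}. c i = 1" by blast
        then show ?thesis
          using IH \<open>c n = 3\<close> \<open>c (Suc n) = 1\<close> unfolding step singles by simp
      qed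
    next
      case False
      then show ?thesis
        using IH next_range unfolding step singles
        by (cases "\<exists>i\<in>{1..n}. c i = 1") auto
    qed
  qed
qed

lemma no_adjacent_full_rows:
  assumes "W \<in> W2 h w" "row W p = {1, 2, 3}" "row W (Suc p) = {1, 2, 3}"
  shows False
  using W2_no_three_neighbours[OF assms(1), of "(p, 2)" "(p, 1)" "(p, 3)" "(Suc p, 2)"] assms(2,3)
  unfolding row_def by (auto simp: adjacent_iff)

lemma interior_full_row_neighbours:
  assumes W: "W \<in> W2 h 3" and "atomic h 3 W" "p \<in> {2..<h}" and full: "row W p = {1, 2, 3}"
  shows "card (row W (p - 1)) = 1 \<and> card (row W (Suc p)) = 1"
proof -
  let ?A = "row W (p - 1)" and ?B = "row W (Suc p)"
  have word: "is_word h 3 W" using W unfolding W2_def by simp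
  have "(p, j) \<in> W" if "j \<in> {1, 2, 3}" for j
  proof -
    have "j \<in> row W p" using that by (simp only: full)
    then show ?thesis by simp
  qed
  then have filled: "(p, 1) \<in> W" "(p, 2) \<in> W" "(p, 3) \<in> W" by simp_all
  have neighbour: "i = p - 1 \<or> i = Suc p \<Longrightarrow> adjacent (p, j) (i, j) \<and> i \<noteq> p" for i j
    using assms(3) by (auto simp: adjacent_iff)
  have "row W i \<subseteq> {1, 3}" if i: "i = p - 1 \<or> i = Suc p" for i
  proof -
    have "(i, 2) \<notin> W"
      using W2_no_three_neighbours[OF W filled(2) filled(1) filled(3), of "(i, 2)"] neighbour[OF i]
      by (auto simp: adjacent_iff)
    moreover have "row W i \<subseteq> {1, 2, 3}" by (rule row_subset_three[OF word])
    ultimately show ?thesis by auto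
  qed
  then have AB: "?A \<union> ?B \<subseteq> {1, 3}" by blast
  have "(p - 1, j) \<notin> W \<or> (Suc p, j) \<notin> W" if "j \<in> {1, 3}" for j
  proof -
    have "(p, j) \<in> W" using filled that by auto
    then show ?thesis
      using W2_no_three_neighbours[OF W _ filled(2), of "(p, j)" "(p - 1, j)" "(Suc p, j)"]
        neighbour[of "p - 1" j] neighbour[of "Suc p" j] that
      by (auto simp: adjacent_iff)
  qed
  then have disjoint: "?A \<inter> ?B = {}" using AB by auto
  have "p - 1 \<in> {1..h}" "Suc p \<in> {1..h}" using assms(3) by auto
  then have "?A \<noteq> {}" "?B \<noteq> {}" using atomic_row_nonempty[OF assms(2)] by blast+
  moreover have "finite ?A" "finite ?B" using AB finite_subset by auto
  ultimately have "1 \<le> card ?A" "1 \<le> card ?B" by (simp_all add: Suc_le_eq card_gt_0_iff)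
  moreover have "card ?A + card ?B \<le> 2"
  proof -
    have "card ?A + card ?B = card (?A \<union> ?B)"
      using disjoint \<open>finite ?A\<close> \<open>finite ?B\<close> by (simp add: card_Un_disjoint)
    also have "\<dots> \<le> card {1, 3 :: nat}" using AB by (intro card_mono) auto
    finally show ?thesis by simp
  qed
  ultimately show ?thesis by linarith
qed

lemma two_full_rows:
  assumes h: "3 \<le> h" and full: "two_full h 3 W" and atomic: "atomic h 3 W"
  shows "row W 1 = {1, 2, 3} \<and> row W h = {1, 2, 3} \<and> (\<forall>i\<in>{1..h}. 2 \<le> card (row W i))"
proof -
  have W: "W \<in> W2 h 3" using full unfolding two_full_def by simp
  then have word: "is_word h 3 W" unfolding W2_def by simp
  define c where "c i = card (row W i)" for i
  have range: "c i \<in> {1, 2, 3}" if "i \<in> {1..h}" for i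
  proof -
    have "row W i \<subseteq> {1, 2, 3}" by (rule row_subset_three[OF word])
    then have "c i \<le> 3" "finite (row W i)"
      unfolding c_def using card_mono[of "{1, 2, 3 :: nat}" "row W i"] finite_subset by auto
    moreover have "c i \<noteq> 0" using atomic_row_nonempty[OF atomic that] \<open>finite (row W i)\<close> c_def by simp
    ultimately show ?thesis by auto
  qed
  have full_iff: "c i = 3 \<longleftrightarrow> row W i = {1, 2, 3}" for i
    using full_row_iff_card[OF word] unfolding c_def by simp
  have "(\<Sum>i=1..h. int (c i) - 2) = int (card W) - 2 * int h"
    using card_word_eq_sum_rows[OF word] by (simp add: c_def sum_subtractf flip: of_nat_sum)
  with two_full_card_ge[OF h full] have "2 \<le> (\<Sum>i=1..h. int (c i) - 2)" by linarith
  also have "\<dots> \<le> of_bool (c 1 = 3) + of_bool (c h = 3) - of_bool (\<exists>i\<in>{1..h}. c i = 1)"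
  proof (rule row_sum_bound[OF range])
    show "c (Suc i) \<noteq> 3" if "i \<in> {1..<h}" "c i = 3" for i
      using no_adjacent_full_rows[OF W] that full_iff by blast
    show "c (p - 1) = 1 \<and> c (Suc p) = 1" if "p \<in> {2..<h}" "c p = 3" for p
      using interior_full_row_neighbours[OF W atomic that(1)] that(2) full_iff unfolding c_def by blast
  qed (use h in auto)
  finally have "c 1 = 3" "c h = 3" "\<forall>i\<in>{1..h}. c i \<noteq> 1"
    unfolding of_bool_def by (auto split: if_splits)
  then show ?thesis using full_iff range unfolding c_def by fastforce
qed

definition seat_open :: "(nat \<times> nat) set \<Rightarrow> nat \<Rightarrow> nat \<Rightarrow> nat \<Rightarrow> bool" where
  "seat_open W j j' n \<longleftrightarrow>
     (\<exists>i. 1 \<le> i \<and> i < n \<and> (i, j') \<in> W \<and> (\<forall>m\<in>{i..n}. (m, j) \<in> W) \<and> (\<forall>m\<in>{i<..n}. (m, j') \<notin> W))"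

lemma seat_open_last_row: "seat_open W j j' n \<Longrightarrow> (n, j) \<in> W \<and> (n, j') \<notin> W"
  unfolding seat_open_def by auto

lemma seat_open_Suc:
  assumes "seat_open W j j' n \<or> (1 \<le> n \<and> (n, j) \<in> W \<and> (n, j') \<in> W)"
    and "(Suc n, j) \<in> W" "(Suc n, j') \<notin> W"
  shows "seat_open W j j' (Suc n)"
  using assms(1)
proof
  assume "seat_open W j j' n"
  then obtain i where "1 \<le> i" "i < n" "(i, j') \<in> W"
    "\<forall>m\<in>{i..n}. (m, j) \<in> W" "\<forall>m\<in>{i<..n}. (m, j') \<notin> W"
    unfolding seat_open_def by blast
  with assms(2,3) show ?thesis
    unfolding seat_open_def by (intro exI[of _ i]) (auto simp: le_Suc_eq)
next
  assume "1 \<le> n \<and> (n, j) \<in> W \<and> (n, j') \<in> W"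
  with assms(2,3) show ?thesis
    unfolding seat_open_def by (intro exI[of _ n]) (auto simp: le_Suc_eq)
qed

lemma has_bench_if_seat_open:
  assumes "seat_open W j j' n" "Suc n \<le> h" "(Suc n, j) \<in> W" "(Suc n, j') \<in> W"
  shows "has_bench h W j j'"
proof -
  obtain i where i: "1 \<le> i" "i < n" "(i, j') \<in> W"
    "\<forall>m\<in>{i..n}. (m, j) \<in> W" "\<forall>m\<in>{i<..n}. (m, j') \<notin> W"
    using assms(1) unfolding seat_open_def by blast
  have last: "i + (Suc n - i + 1) - 1 = Suc n" "i + (Suc n - i + 1) - 2 = n" using i by auto
  show ?thesis
    unfolding has_bench_def
  proof (intro exI conjI)
    show "3 \<le> Suc n - i + 1" using i by simp
  qed (use i assms(2-4) last in \<open>auto simp: le_Suc_eq\<close>)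
qed

context
  fixes h :: nat and W :: "(nat \<times> nat) set" and j k :: nat
  assumes W: "W \<in> W2 h 3"
    and rows_two: "\<And>i. i \<in> {1..h} \<Longrightarrow> 2 \<le> card (row W i)"
    and first_full: "row W 1 = {1, 2, 3}" and last_full: "row W h = {1, 2, 3}"
    and h: "3 \<le> h" and seat_outer: "{j, k} = {1, 3}"
begin

lemma filled_one_of:
  assumes "i \<in> {1..h}" "a \<in> {1, 2, 3}" "b \<in> {1, 2, 3}" "a \<noteq> b"
  shows "(i, a) \<in> W \<or> (i, b) \<in> W"
proof (rule ccontr)
  assume "\<not> ?thesis"
  then have "row W i \<subseteq> {1, 2, 3} - {a, b}"
    using row_subset_three W unfolding W2_def by auto
  then have "card (row W i) \<le> card ({1, 2, 3 :: nat} - {a, b})" by (intro card_mono) auto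
  also have "\<dots> = 1" using assms(2-4) by (subst card_Diff_subset) auto
  finally show False using rows_two[OF assms(1)] by simp
qed

lemma end_rows_filled: "a \<in> {1, 2, 3} \<Longrightarrow> (1, a) \<in> W \<and> (h, a) \<in> W"
  using first_full last_full by (metis mem_row_iff)

lemma seat_columns: "j \<in> {1, 2, 3}" "k \<in> {1, 2, 3}" "j \<noteq> 2" "k \<noteq> 2" "j \<noteq> k"
  "adjacent (i, 2) (i, j)" "adjacent (i, k) (i, 2)"
  using seat_outer by (auto simp: doubleton_eq_iff adjacent_iff)

lemma leg_start_step:
  assumes n: "n \<in> {1..<h}" and leg: "(n, j) \<in> W" "(n, 2) \<in> W" and top: "n = 1 \<or> (n - 1, j) \<notin> W"
  shows "seat_open W j 2 (Suc n)"
proof -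
  have "(Suc n, 2) \<notin> W"
  proof
    assume below: "(Suc n, 2) \<in> W"
    show False
    proof (cases "n = 1")
      case True
      have "(1, k) \<in> W" using end_rows_filled seat_columns by blast
      then show False
        using W2_no_three_neighbours[OF W leg(2) leg(1) below, of "(1, k)"] True seat_columns
        by (auto simp: adjacent_iff)
    next
      case False
      then have "n - 1 \<in> {1..h}" using n by auto
      then have "(n - 1, 2) \<in> W" using filled_one_of[of "n - 1" j 2] top False seat_columns by auto
      then show False
        using W2_no_three_neighbours[OF W leg(2) leg(1) below, of "(n - 1, 2)"] False n seat_columns
        by (auto simp: adjacent_iff)
    qed
  qed
  moreover have "(Suc n, j) \<in> W" using filled_one_of[of "Suc n" j 2] calculation n seat_columns by auto
  ultimately show ?thesis using seat_open_Suc[of W j 2 n] leg n by auto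
qed

lemma gap_step:
  assumes n: "n \<in> {1..<h}" and gap: "(n, j) \<notin> W" "(n - 1, 2) \<notin> W"
  shows "(Suc n, j) \<in> W \<and> (Suc n, 2) \<in> W"
proof -
  have "n \<noteq> 1" using gap end_rows_filled seat_columns by blast
  then have prev: "n - 1 \<in> {1..h}" using n by auto
  have "(n, 2) \<in> W" "(n, k) \<in> W" using filled_one_of[of n j] gap n seat_columns by auto
  moreover have "(n - 1, k) \<in> W" using filled_one_of[OF prev, of 2 k] gap seat_columns by auto
  ultimately have "(Suc n, k) \<notin> W"
    using W2_no_three_neighbours[OF W, of "(n, k)" "(n, 2)" "(n - 1, k)" "(Suc n, k)"]
      seat_columns \<open>n \<noteq> 1\<close> n by (auto simp: adjacent_iff)
  then show ?thesis using filled_one_of[of "Suc n" k] n seat_columns by auto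
qed

lemma scan_rows:
  "n \<in> {1..h} \<Longrightarrow> has_bench h W j 2 \<or> seat_open W j 2 n
     \<or> ((n, j) \<in> W \<and> (n, 2) \<in> W \<and> (n = 1 \<or> (n - 1, j) \<notin> W))
     \<or> ((n, j) \<notin> W \<and> (n - 1, 2) \<notin> W)"
proof (induction n)
  case 0
  then show ?case by simp
next
  case (Suc n)
  show ?case
  proof (cases "n = 0")
    case True
    then show ?thesis using end_rows_filled seat_columns by simp
  next
    case False
    then have n: "n \<in> {1..<h}" using Suc.prems by simp
    from Suc.IH n consider "has_bench h W j 2" | "seat_open W j 2 n"
      | "(n, j) \<in> W" "(n, 2) \<in> W" "n = 1 \<or> (n - 1, j) \<notin> W"
      | "(n, j) \<notin> W" "(n - 1, 2) \<notin> W"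
      by auto
    then show ?thesis
    proof cases
      case 2
      then show ?thesis
        using seat_open_last_row[OF 2] seat_open_Suc[of W j 2 n] has_bench_if_seat_open[OF 2] n
        by (cases "(Suc n, j) \<in> W"; cases "(Suc n, 2) \<in> W") auto
    next
      case 3
      then show ?thesis using leg_start_step n by blast
    next
      case 4
      then show ?thesis using gap_step n by simp
    qed simp
  qed
qed

lemma has_bench_seat: "has_bench h W j 2"
proof -
  have "h \<in> {1..h}" "h \<noteq> 1" using h by auto
  moreover have "(h, j) \<in> W" "(h, 2) \<in> W" "(h, k) \<in> W" using end_rows_filled seat_columns by blast+
  moreover have "(h - 1, 2) \<in> W" if "(h - 1, j) \<notin> W"
    using filled_one_of[of "h - 1" j 2] that h seat_columns by auto
  moreover have "(h - 1, 2) \<notin> W"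
    using W2_no_three_neighbours[OF W \<open>(h, 2) \<in> W\<close> \<open>(h, j) \<in> W\<close> \<open>(h, k) \<in> W\<close>, of "(h - 1, 2)"]
      h seat_columns by (auto simp: adjacent_iff)
  ultimately show ?thesis using scan_rows[of h] seat_open_last_row by blast
qed

end

theorem mainTheorem5:
  fixes h :: nat and W :: "(nat \<times> nat) set"
  assumes "h \<ge> 3"
    and "W \<in> W2 h 3"
    and "two_full h 3 W"
    and "atomic h 3 W"
  shows "has_bench h W 1 2 \<and> has_bench h W 3 2"
proof -
  have rows: "\<And>i. i \<in> {1..h} \<Longrightarrow> 2 \<le> card (row W i)" "row W 1 = {1, 2, 3}" "row W h = {1, 2, 3}"
    using two_full_rows[OF assms(1,3,4)] by auto
  show ?thesis
    using has_bench_seat[OF assms(2) rows assms(1), of 1 3] has_bench_seat[OF assms(2) rows assms(1), of 3 1]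
    by auto
qed

end
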